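(* Let $a,b>0$, $\alpha\in(0,3)$, $p>2$, and $h(x)\ge h_0>0$ on $\mathbb{Z}^3$. Then (i) there exist $\theta,\rho>0$ such that $J(u)\ge\theta>0$ for all $u\in H$ with $\|u\|=\rho$; (ii) there exists $e\in H$ with $\|e\|>\rho$ and $J(e)<0$.
   Context: $\mathbb{Z}^3$ is the integer lattice graph ($x\sim y$ iff $\sum_i|x_i-y_i|=1$) with counting measure $\mu$. $|\nabla u|(x)=\big(\tfrac12\sum_{y\sim x}(u(y)-u(x))^2\big)^{1/2}$. $R_\alpha(x,y)=\frac{K_\alpha}{(2\pi)^3}\int_{\mathbb{T}^3}e^{i(x-y)\cdot k}\mu(k)^{-\alpha/2}dk$, $K_\alpha=\frac{1}{(2\pi)^3}\int_{\mathbb{T}^3}\mu(k)^{\alpha/2}dk$, $\mu(k)=6-2\sum_j\cos k_j$, $\mathbb{T}^3=[0,2\pi]^3$; $(R_\alpha\ast f)(x)=\sum_yR_\alpha(x,y)f(y)$. $H=\{u\in H^1(\mathbb{Z}^3):\sum hu^2<\infty\}$ with $\|u\|^2=\sum_x(a|\nabla u|^2+hu^2)$, $H^1(\mathbb{Z}^3)$ being the completion of finitely supported functions under $\sum(|\nabla u|^2+u^2)$. $J(u)=\frac12\|u\|^2+\frac b4(\sum|\nabla u|^2)^2-\frac1{2p}\sum(R_\alpha\ast|u|^p)|u|^p$. *)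

theory Defs
  imports "HOL-Analysis.Analysis"
begin

type_synonym lat = "int \<times> int \<times> int"

definition adj :: "lat \<Rightarrow> lat \<Rightarrow> bool" where
  "adj x y \<longleftrightarrow> \<bar>fst x - fst y\<bar> + \<bar>fst (snd x) - fst (snd y)\<bar>
                 + \<bar>snd (snd x) - snd (snd y)\<bar> = 1"

definition grad_norm :: "(lat \<Rightarrow> real) \<Rightarrow> lat \<Rightarrow> real" where
  "grad_norm u x = sqrt ((1/2) * (\<Sum>y\<in>{y. adj x y}. (u y - u x)^2))"

definition fin_supp :: "(lat \<Rightarrow> real) \<Rightarrow> bool" where
  "fin_supp f \<longleftrightarrow> finite {x. f x \<noteq> 0}"

text \<open>H^1(Z^3): completion (closure, realised inside functions on Z^3) of the
finitely supported functions w.r.t. the norm (sum (|grad u|^2 + u^2))^(1/2).\<close>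
definition H1 :: "(lat \<Rightarrow> real) set" where
  "H1 = {u. (\<lambda>x. (grad_norm u x)^2 + (u x)^2) summable_on UNIV \<and>
            (\<exists>f :: nat \<Rightarrow> lat \<Rightarrow> real. (\<forall>n. fin_supp (f n)) \<and>
               (\<forall>n. (\<lambda>x. (grad_norm (\<lambda>z. u z - f n z) x)^2 + (u x - f n x)^2) summable_on UNIV) \<and>
               (\<lambda>n. \<Sum>\<^sub>\<infinity>x. (grad_norm (\<lambda>z. u z - f n z) x)^2 + (u x - f n x)^2)
                  \<longlonglongrightarrow> 0)}"

definition Hsp :: "real \<Rightarrow> (lat \<Rightarrow> real) \<Rightarrow> (lat \<Rightarrow> real) set" where
  "Hsp a h = {u \<in> H1. (\<lambda>x. h x * (u x)^2) summable_on UNIV}"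

definition Hnorm :: "real \<Rightarrow> (lat \<Rightarrow> real) \<Rightarrow> (lat \<Rightarrow> real) \<Rightarrow> real" where
  "Hnorm a h u = sqrt (\<Sum>\<^sub>\<infinity>x. a * (grad_norm u x)^2 + h x * (u x)^2)"

definition symb :: "real \<times> real \<times> real \<Rightarrow> real" where
  "symb k = 6 - 2 * (cos (fst k) + cos (fst (snd k)) + cos (snd (snd k)))"

definition torus :: "(real \<times> real \<times> real) set" where
  "torus = {0..2*pi} \<times> {0..2*pi} \<times> {0..2*pi}"

definition K_const :: "real \<Rightarrow> real" where
  "K_const \<alpha> = (1 / (2*pi)^3) * (LINT k:torus|lborel. symb k powr (\<alpha>/2))"

definition ldot :: "lat \<Rightarrow> real \<times> real \<times> real \<Rightarrow> real" where
  "ldot z k = real_of_int (fst z) * fst k + real_of_int (fst (snd z)) * fst (snd k)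
             + real_of_int (snd (snd z)) * snd (snd k)"

text \<open>R_alpha(x,y) as the (complex) Fourier integral of the paper; it is real-valued
(the imaginary part vanishes by symmetry), so we take the real part.\<close>
definition R_c :: "real \<Rightarrow> lat \<Rightarrow> lat \<Rightarrow> complex" where
  "R_c \<alpha> x y = complex_of_real (K_const \<alpha> / (2*pi)^3) *
     (LINT k:torus|lborel. cis (ldot (x - y) k) * complex_of_real (symb k powr (-\<alpha>/2)))"

definition R_alpha :: "real \<Rightarrow> lat \<Rightarrow> lat \<Rightarrow> real" where
  "R_alpha \<alpha> x y = Re (R_c \<alpha> x y)"

definition conv :: "real \<Rightarrow> (lat \<Rightarrow> real) \<Rightarrow> lat \<Rightarrow> real" where
  "conv \<alpha> f x = (\<Sum>\<^sub>\<infinity>y. R_alpha \<alpha> x y * f y)"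

definition Jfun :: "real \<Rightarrow> real \<Rightarrow> real \<Rightarrow> real \<Rightarrow> (lat \<Rightarrow> real) \<Rightarrow> (lat \<Rightarrow> real) \<Rightarrow> real" where
  "Jfun a b \<alpha> p h u =
     (1/2) * (Hnorm a h u)^2
     + (b/4) * (\<Sum>\<^sub>\<infinity>x. (grad_norm u x)^2)^2
     - (1/(2*p)) * (\<Sum>\<^sub>\<infinity>x. conv \<alpha> (\<lambda>y. \<bar>u y\<bar> powr p) x * \<bar>u x\<bar> powr p)"

end

theory Submission
  imports Defs "HOL-Real_Asymp.Real_Asymp"
begin

text \<open>
  (i) If ||u||^2 = rho^2 <= h0, then sum u^2 <= rho^2/h0 <= 1, so |u| <= 1 pointwise and
  |u|^p <= u^2. The kernel satisfies |R_alpha(x,y)| <= R_alpha(0,0), because its Fourier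
  integrand has modulus mu^(-alpha/2). Hence the Choquard term is at most
  R_alpha(0,0) rho^4 / h0^2, which is below rho^2/4 for small rho.

  (ii) For the unit impulse delta at the origin,
  J(t delta) = A t^2 + B t^4 - R_alpha(0,0) t^(2p) / (2p), which is negative for large t
  because p > 2, provided R_alpha(0,0) > 0.

  That positivity is where alpha < 3 enters: mu^(-alpha/2) must be integrable over the
  torus (otherwise the Bochner integral defining R_alpha is 0). Since
  1 - cos t >= d(t)^2/12, with d(t) the distance from t to 2 pi Z, AM-GM gives
  mu(k)^(-alpha/2) <= 6^(alpha/2) (d(k1) d(k2) d(k3))^(-alpha/3), a product of
  one-dimensional singularities that are integrable because alpha/3 < 1.
\<close>

lemma cos_le_quartic_taylor: "cos (x::real) \<le> 1 - x^2/2 + x^4/24"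
proof -
  obtain t where t: "cos x = (\<Sum>m<4. cos_coeff m * x ^ m) + cos (t + 1/2 * real 4 * pi) / fact 4 * x ^ 4"
    using Maclaurin_cos_expansion[of x 4] by blast
  have taylor: "(\<Sum>m<4. cos_coeff m * x ^ m) = 1 - x^2/2"
    by (simp add: numeral_eq_Suc cos_coeff_def del: One_nat_def) (simp add: dvd_def; presburger)
  have "cos (t + 1/2 * real 4 * pi) * x^4 \<le> 1 * x^4"
    by (intro mult_right_mono) auto
  moreover have "(fact 4::real) = 24"
    by (simp add: numeral_eq_Suc)
  ultimately show ?thesis
    using t taylor by simp
qed

lemma quadratic_le_one_minus_cos:
  assumes "0 \<le> (x::real)" "x \<le> pi"
  shows "x^2/12 \<le> 1 - cos x"
proof -
  have "pi * pi \<le> 3.15 * 3.15"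
    using pi_approx by (intro mult_mono) auto
  then have "x^2 \<le> 10"
    using assms power_mono[of x pi 2] by (simp add: power2_eq_square)
  then have "x^2 * x^2 \<le> x^2 * 10"
    by (intro mult_left_mono) auto
  then have "x^2/12 \<le> x^2/2 - x^4/24"
    by (simp add: power4_eq_xxxx power2_eq_square)
  then show ?thesis
    using cos_le_quartic_taylor[of x] by linarith
qed

definition circle_dist :: "real \<Rightarrow> real" where
  "circle_dist t = min t (2*pi - t)"

lemma circle_dist_pos: "0 < t \<Longrightarrow> t < 2*pi \<Longrightarrow> 0 < circle_dist t"
  by (simp add: circle_dist_def)

lemma circle_dist_sq_le_one_minus_cos:
  assumes "0 < t" "t < 2*pi"
  shows "circle_dist t ^ 2 / 12 \<le> 1 - cos t"
proof (cases "t \<le> pi")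
  case True
  then show ?thesis
    using quadratic_le_one_minus_cos[of t] assms by (simp add: circle_dist_def)
next
  case False
  have "cos t = cos (2*pi - t)"
    by simp
  then show ?thesis
    using quadratic_le_one_minus_cos[of "2*pi - t"] assms False by (simp add: circle_dist_def)
qed

lemma circle_dist_powr_le: "circle_dist t powr (-\<beta>) \<le> t powr (-\<beta>) + (2*pi - t) powr (-\<beta>)"
  by (simp add: circle_dist_def min_def add_increasing add_increasing2)

lemma sum_squares_powr_le_prod_powr:
  fixes x y z c :: real
  assumes "0 < x" "0 < y" "0 < z" "0 < c"
  shows "(x^2 + y^2 + z^2) powr (-c/2) \<le> (x*y*z) powr (-c/3)"
proof -
  define S where "S = x^2 + y^2 + z^2"
  define P where "P = x*y*z"
  have S: "0 < S" "x^2 \<le> S" "y^2 \<le> S" "z^2 \<le> S"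
    using assms by (auto simp: S_def add_pos_nonneg)
  have P: "0 < P"
    using assms by (simp add: P_def)
  have "P powr 2 = x^2 * y^2 * z^2"
    using P by (simp add: P_def power_mult_distrib)
  also have "\<dots> \<le> S powr 3"
    using S by (simp add: power3_eq_cube mult_mono)
  finally have "(P powr 2) powr (1/3) \<le> (S powr 3) powr (1/3)"
    using P by (intro powr_mono2) auto
  moreover have "(P powr 2) powr (1/3) = P powr (2/3)" "(S powr 3) powr (1/3) = S"
    using S by (subst powr_powr; simp)+
  ultimately have "P powr (2/3) \<le> S"
    by simp
  then have "S powr (-c/2) \<le> (P powr (2/3)) powr (-c/2)"
    using P assms by (intro powr_mono2') auto
  also have "\<dots> = P powr (-c/3)"
    by (simp add: powr_powr)
  finally show ?thesis
    by (simp add: S_def P_def)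
qed

lemma symb_neg_powr_le_product:
  assumes "0 < \<alpha>" "0 < k1" "k1 < 2*pi" "0 < k2" "k2 < 2*pi" "0 < k3" "k3 < 2*pi"
  shows "symb (k1, k2, k3) powr (-\<alpha>/2) \<le> 6 powr (\<alpha>/2) *
     ((k1 powr (-(\<alpha>/3)) + (2*pi - k1) powr (-(\<alpha>/3))) *
      ((k2 powr (-(\<alpha>/3)) + (2*pi - k2) powr (-(\<alpha>/3))) *
       (k3 powr (-(\<alpha>/3)) + (2*pi - k3) powr (-(\<alpha>/3)))))"
proof -
  define S where "S = circle_dist k1 ^ 2 + circle_dist k2 ^ 2 + circle_dist k3 ^ 2"
  have S: "0 < S/6"
    using circle_dist_pos[of k1] assms by (simp add: S_def add_pos_nonneg)
  have "S/6 \<le> symb (k1, k2, k3)"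
    using circle_dist_sq_le_one_minus_cos[of k1] circle_dist_sq_le_one_minus_cos[of k2]
      circle_dist_sq_le_one_minus_cos[of k3] assms
    by (simp add: symb_def S_def)
  then have "symb (k1, k2, k3) powr (-\<alpha>/2) \<le> (S/6) powr (-\<alpha>/2)"
    using S assms by (intro powr_mono2') auto
  also have "\<dots> = 6 powr (\<alpha>/2) * S powr (-\<alpha>/2)"
    by (simp add: powr_divide powr_minus_divide)
  also have "\<dots> \<le> 6 powr (\<alpha>/2) * (circle_dist k1 * circle_dist k2 * circle_dist k3) powr (-\<alpha>/3)"
    unfolding S_def using assms
    by (intro mult_left_mono sum_squares_powr_le_prod_powr circle_dist_pos) auto
  also have "\<dots> = 6 powr (\<alpha>/2) * (circle_dist k1 powr (-(\<alpha>/3)) *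
      (circle_dist k2 powr (-(\<alpha>/3)) * circle_dist k3 powr (-(\<alpha>/3))))"
    by (simp add: powr_mult)
  also have "\<dots> \<le> 6 powr (\<alpha>/2) *
     ((k1 powr (-(\<alpha>/3)) + (2*pi - k1) powr (-(\<alpha>/3))) *
      ((k2 powr (-(\<alpha>/3)) + (2*pi - k2) powr (-(\<alpha>/3))) *
       (k3 powr (-(\<alpha>/3)) + (2*pi - k3) powr (-(\<alpha>/3)))))"
    by (intro mult_left_mono mult_mono circle_dist_powr_le mult_nonneg_nonneg add_nonneg_nonneg) auto
  finally show ?thesis .
qed

lemma nn_integral_lborel_prod_split:
  fixes f :: "real \<Rightarrow> ennreal" and g :: "'b::euclidean_space \<Rightarrow> ennreal"
  assumes [measurable]: "f \<in> borel_measurable borel" "g \<in> borel_measurable borel"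
  shows "(\<integral>\<^sup>+k. f (fst k) * g (snd k) \<partial>lborel) = (\<integral>\<^sup>+x. f x \<partial>lborel) * (\<integral>\<^sup>+y. g y \<partial>lborel)"
proof -
  have "(\<integral>\<^sup>+k. f (fst k) * g (snd k) \<partial>lborel) = (\<integral>\<^sup>+k. f (fst k) * g (snd k) \<partial>(lborel \<Otimes>\<^sub>M lborel))"
    by (simp add: lborel_prod)
  also have "\<dots> = (\<integral>\<^sup>+x. \<integral>\<^sup>+y. f x * g y \<partial>lborel \<partial>lborel)"
    by (subst lborel.nn_integral_fst[symmetric]) auto
  also have "\<dots> = (\<integral>\<^sup>+x. f x \<partial>lborel) * (\<integral>\<^sup>+y. g y \<partial>lborel)"
    by (simp add: nn_integral_cmult nn_integral_multc)
  finally show ?thesis .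
qed

lemma nn_integral_powr_neg_finite:
  assumes "0 < \<beta>" "\<beta> < 1"
  shows "(\<integral>\<^sup>+t. ennreal (t powr (-\<beta>)) * indicator {0..2*pi} t \<partial>lborel) < \<infinity>"
proof -
  have "(\<integral>\<^sup>+t. ennreal (t powr (-\<beta>)) * indicator {0..2*pi} t \<partial>lborel)
      = ennreal ((2*pi) powr (-\<beta>+1) / (-\<beta>+1))"
    by (rule nn_integral_has_integral_lebesgue'[OF _ has_integral_powr_from_0]) (use assms in auto)
  then show ?thesis
    by simp
qed

text \<open>Infinite at the endpoints, so that the product majorant of symb powr (-\<alpha>/2) below
  also holds on the boundary of the torus.\<close>
definition edge_weight :: "real \<Rightarrow> real \<Rightarrow> ennreal" where
  "edge_weight \<beta> t =
     (if 0 < t \<and> t < 2*pi then ennreal (t powr (-\<beta>) + (2*pi - t) powr (-\<beta>))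
      else if t = 0 \<or> t = 2*pi then \<infinity> else 0)"

lemma edge_weight_measurable [measurable]: "edge_weight \<beta> \<in> borel_measurable borel"
  unfolding edge_weight_def by measurable

lemma nn_integral_edge_weight_finite:
  assumes "0 < \<beta>" "\<beta> < 1"
  shows "(\<integral>\<^sup>+t. edge_weight \<beta> t \<partial>lborel) < \<infinity>"
proof -
  let ?w = "\<lambda>t. ennreal (t powr (-\<beta>)) * indicator {0..2*pi} t"
  have "AE t in lborel. edge_weight \<beta> t = ?w t + ?w (2*pi - t)"
    by (rule AE_I'[OF finite_imp_null_set_lborel[of "{0, 2*pi}"]])
      (auto simp: edge_weight_def indicator_def ennreal_plus)
  then have "(\<integral>\<^sup>+t. edge_weight \<beta> t \<partial>lborel) = (\<integral>\<^sup>+t. ?w t \<partial>lborel) + (\<integral>\<^sup>+t. ?w (2*pi - t) \<partial>lborel)"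
    by (simp add: nn_integral_cong_AE nn_integral_add)
  also have "(\<integral>\<^sup>+t. ?w (2*pi - t) \<partial>lborel) = (\<integral>\<^sup>+t. ?w t \<partial>lborel)"
    using nn_integral_real_affine[of ?w "-1" "2*pi"] by simp
  finally show ?thesis
    using nn_integral_powr_neg_finite[OF assms] by (simp add: ennreal_add_less_top)
qed

lemma torus_cbox: "torus = cbox (0, 0, 0) (2*pi, 2*pi, 2*pi)"
  unfolding torus_def by (simp add: cbox_Pair_eq)

lemma torus_sets [measurable]: "torus \<in> sets lborel"
  unfolding torus_cbox by simp

lemma emeasure_torus_finite: "emeasure lborel torus < \<infinity>"
  unfolding torus_cbox by (rule emeasure_lborel_cbox_finite)

lemma fst_borel_measurable [measurable]:
  "(fst :: 'a::euclidean_space \<times> 'b::euclidean_space \<Rightarrow> 'a) \<in> borel_measurable borel"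
  by (intro borel_measurable_continuous_onI continuous_intros)

lemma snd_borel_measurable [measurable]:
  "(snd :: 'a::euclidean_space \<times> 'b::euclidean_space \<Rightarrow> 'b) \<in> borel_measurable borel"
  by (intro borel_measurable_continuous_onI continuous_intros)

lemma symb_borel_measurable [measurable]: "symb \<in> borel_measurable borel"
  unfolding symb_def by (intro borel_measurable_continuous_onI continuous_intros)

lemma symb_nonneg: "0 \<le> symb k"
proof -
  have "cos (fst k) + cos (fst (snd k)) + cos (snd (snd k)) \<le> 3"
    using cos_le_one[of "fst k"] cos_le_one[of "fst (snd k)"] cos_le_one[of "snd (snd k)"] by linarith
  then show ?thesis
    unfolding symb_def by (simp add: algebra_simps)
qed

lemma symb_le_12: "symb k \<le> 12"
proof -
  have "-3 \<le> cos (fst k) + cos (fst (snd k)) + cos (snd (snd k))"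
    using cos_ge_minus_one[of "fst k"] cos_ge_minus_one[of "fst (snd k)"] cos_ge_minus_one[of "snd (snd k)"]
    by linarith
  then show ?thesis
    unfolding symb_def by (simp add: algebra_simps)
qed

lemma symb_neg_powr_le_edge_weights:
  assumes "0 < \<alpha>"
  shows "ennreal (indicator torus k * symb k powr (-\<alpha>/2))
    \<le> ennreal (6 powr (\<alpha>/2)) *
        (edge_weight (\<alpha>/3) (fst k) * (edge_weight (\<alpha>/3) (fst (snd k)) * edge_weight (\<alpha>/3) (snd (snd k))))"
proof (cases "k \<in> torus")
  case False
  then show ?thesis
    by simp
next
  case True
  obtain k1 k2 k3 where k: "k = (k1, k2, k3)"
    by (metis prod.collapse)
  have box: "0 \<le> k1" "k1 \<le> 2*pi" "0 \<le> k2" "k2 \<le> 2*pi" "0 \<le> k3" "k3 \<le> 2*pi"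
    using True by (auto simp: torus_def k)
  show ?thesis
  proof (cases "k1 \<in> {0<..<2*pi} \<and> k2 \<in> {0<..<2*pi} \<and> k3 \<in> {0<..<2*pi}")
    case True
    define w where "w t = t powr (-(\<alpha>/3)) + (2*pi - t) powr (-(\<alpha>/3))" for t
    have "edge_weight (\<alpha>/3) t = ennreal (w t)" if "t \<in> {0<..<2*pi}" for t
      using that by (simp add: edge_weight_def w_def)
    moreover have "0 \<le> w t" for t
      by (simp add: w_def)
    ultimately have "ennreal (6 powr (\<alpha>/2)) *
        (edge_weight (\<alpha>/3) k1 * (edge_weight (\<alpha>/3) k2 * edge_weight (\<alpha>/3) k3))
      = ennreal (6 powr (\<alpha>/2) * (w k1 * (w k2 * w k3)))"
      using True by (simp add: ennreal_mult)
    then show ?thesis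
      using symb_neg_powr_le_product[OF assms, of k1 k2 k3] True \<open>k \<in> torus\<close>
      by (simp add: k w_def ennreal_leI)
  next
    case False
    then have "edge_weight (\<alpha>/3) k1 * (edge_weight (\<alpha>/3) k2 * edge_weight (\<alpha>/3) k3) = \<infinity>"
      using box by (auto simp: edge_weight_def ennreal_mult_eq_top_iff add_pos_nonneg)
    then show ?thesis
      by (simp add: k)
  qed
qed

lemma symb_neg_powr_integrable:
  assumes "0 < \<alpha>" "\<alpha> < 3"
  shows "set_integrable lborel torus (\<lambda>k. symb k powr (-\<alpha>/2))"
  unfolding set_integrable_def
proof (rule integrableI_bounded)
  let ?w = "edge_weight (\<alpha>/3)"
  show "(\<lambda>k. indicator torus k *\<^sub>R symb k powr (-\<alpha>/2)) \<in> borel_measurable lborel"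
    by measurable
  have "(\<integral>\<^sup>+k. ennreal (norm (indicator torus k *\<^sub>R symb k powr (-\<alpha>/2))) \<partial>lborel)
     \<le> (\<integral>\<^sup>+k. ennreal (6 powr (\<alpha>/2)) * (?w (fst k) * (?w (fst (snd k)) * ?w (snd (snd k)))) \<partial>lborel)"
    using symb_neg_powr_le_edge_weights[OF assms(1)] by (intro nn_integral_mono) (simp add: indicator_def)
  also have "\<dots> = ennreal (6 powr (\<alpha>/2)) * ((\<integral>\<^sup>+t. ?w t \<partial>lborel) * ((\<integral>\<^sup>+t. ?w t \<partial>lborel) * (\<integral>\<^sup>+t. ?w t \<partial>lborel)))"
    by (simp add: nn_integral_cmult nn_integral_lborel_prod_split[symmetric])
  also have "\<dots> < \<infinity>"
    using nn_integral_edge_weight_finite[of "\<alpha>/3"] assms by (simp add: ennreal_mult_less_top)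
  finally show "(\<integral>\<^sup>+k. ennreal (norm (indicator torus k *\<^sub>R symb k powr (-\<alpha>/2))) \<partial>lborel) < \<infinity>" .
qed

definition central_cube :: "(real \<times> real \<times> real) set" where
  "central_cube = {pi/2..3*pi/2} \<times> {pi/2..3*pi/2} \<times> {pi/2..3*pi/2}"

lemma central_cube_cbox: "central_cube = cbox (pi/2, pi/2, pi/2) (3*pi/2, 3*pi/2, 3*pi/2)"
  unfolding central_cube_def by (simp add: cbox_Pair_eq)

lemma central_cube_subset_torus: "central_cube \<subseteq> torus"
  unfolding central_cube_def torus_def by auto

lemma symb_ge_6_on_central_cube:
  assumes "k \<in> central_cube"
  shows "6 \<le> symb k"
proof -
  have "cos t \<le> 0" if "pi/2 \<le> t" "t \<le> 3*pi/2" for t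
    using cos_ge_zero[of "t - pi"] that by simp
  then have "cos (fst k) \<le> 0" "cos (fst (snd k)) \<le> 0" "cos (snd (snd k)) \<le> 0"
    using assms by (auto simp: central_cube_def)
  then show ?thesis
    unfolding symb_def by (simp add: algebra_simps)
qed

lemma set_integral_torus_pos:
  fixes \<phi> :: "real \<times> real \<times> real \<Rightarrow> real"
  assumes "set_integrable lborel torus \<phi>" "\<And>k. k \<in> torus \<Longrightarrow> 0 \<le> \<phi> k"
    and "\<And>k. k \<in> central_cube \<Longrightarrow> c \<le> \<phi> k" "0 < c"
  shows "0 < (LINT k:torus|lborel. \<phi> k)"
proof -
  have cube: "central_cube \<in> sets lborel" "emeasure lborel central_cube < \<infinity>"
    unfolding central_cube_cbox by (simp, rule emeasure_lborel_cbox_finite)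
  have "0 < c * measure lborel central_cube"
    using assms(4) unfolding central_cube_cbox
    by (simp add: measure_lborel_cbox_eq Basis_prod_def inner_prod_def)
  also have "\<dots> = (LINT k|lborel. c * indicator central_cube k)"
    using cube by simp
  also have "\<dots> \<le> (LINT k|lborel. indicator torus k *\<^sub>R \<phi> k)"
  proof (rule integral_mono)
    show "integrable lborel (\<lambda>k. indicator torus k *\<^sub>R \<phi> k)"
      using assms(1) by (simp add: set_integrable_def)
    show "c * indicator central_cube k \<le> indicator torus k *\<^sub>R \<phi> k" for k
      using assms(2,3)[of k] central_cube_subset_torus by (auto simp: indicator_def)
  qed (use cube in simp)
  finally show ?thesis
    by (simp add: set_lebesgue_integral_def)
qed

lemma K_const_pos:
  assumes "0 < \<alpha>"
  shows "0 < K_const \<alpha>"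
proof -
  have "set_integrable lborel torus (\<lambda>k. symb k powr (\<alpha>/2))"
    unfolding set_integrable_def
  proof (rule integrableI_bounded_set_indicator[where B="12 powr (\<alpha>/2)"])
    show "AE k in lborel. k \<in> torus \<longrightarrow> norm (symb k powr (\<alpha>/2)) \<le> 12 powr (\<alpha>/2)"
      using assms symb_le_12 symb_nonneg by (auto intro!: powr_mono2)
  qed (use emeasure_torus_finite torus_sets in auto)
  then have "0 < (LINT k:torus|lborel. symb k powr (\<alpha>/2))"
  proof (rule set_integral_torus_pos)
    show "1 \<le> symb k powr (\<alpha>/2)" if "k \<in> central_cube" for k
      using symb_ge_6_on_central_cube[OF that] assms by (intro ge_one_powr_ge_zero) auto
  qed auto
  then show ?thesis
    by (simp add: K_const_def)
qed

lemma R_alpha_diag: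
  "R_alpha \<alpha> x x = K_const \<alpha> / (2*pi)^3 * (LINT k:torus|lborel. symb k powr (-\<alpha>/2))"
  by (simp add: R_alpha_def R_c_def ldot_def set_integral_complex_of_real)

lemma R_alpha_diag_pos:
  assumes "0 < \<alpha>" "\<alpha> < 3"
  shows "0 < R_alpha \<alpha> x x"
proof -
  have "0 < (LINT k:torus|lborel. symb k powr (-\<alpha>/2))"
  proof (rule set_integral_torus_pos[OF symb_neg_powr_integrable[OF assms]])
    show "12 powr (-\<alpha>/2) \<le> symb k powr (-\<alpha>/2)" if "k \<in> central_cube" for k
      using symb_ge_6_on_central_cube[OF that] symb_le_12[of k] assms by (intro powr_mono2') auto
  qed auto
  then show ?thesis
    using K_const_pos[OF assms(1)] by (simp add: R_alpha_diag)
qed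

lemma abs_R_alpha_le_diag: "\<bar>R_alpha \<alpha> x y\<bar> \<le> R_alpha \<alpha> 0 0"
proof -
  let ?f = "\<lambda>k. indicator torus k *\<^sub>R (cis (ldot (x - y) k) * complex_of_real (symb k powr (-\<alpha>/2)))"
  define c where "c = K_const \<alpha> / (2*pi)^3"
  have c: "0 \<le> c"
    unfolding c_def K_const_def set_lebesgue_integral_def
    by (intro divide_nonneg_pos mult_nonneg_nonneg integral_nonneg_AE) auto
  have "\<bar>R_alpha \<alpha> x y\<bar> \<le> norm (R_c \<alpha> x y)"
    unfolding R_alpha_def by (rule abs_Re_le_cmod)
  also have "\<dots> = c * norm (LINT k|lborel. ?f k)"
    using c unfolding R_c_def set_lebesgue_integral_def c_def by (simp only: norm_mult norm_of_real abs_of_nonneg)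
  also have "\<dots> \<le> c * (LINT k|lborel. norm (?f k))"
    using c by (intro mult_left_mono integral_norm_bound) auto
  also have "(LINT k|lborel. norm (?f k)) = (LINT k:torus|lborel. symb k powr (-\<alpha>/2))"
    unfolding set_lebesgue_integral_def
    by (intro Bochner_Integration.integral_cong) (auto simp: norm_mult indicator_def)
  finally show ?thesis
    by (simp add: R_alpha_diag c_def)
qed

lemma abs_infsum_le_dominating:
  fixes f g :: "'a \<Rightarrow> real"
  assumes "g summable_on A" "\<And>x. x \<in> A \<Longrightarrow> \<bar>f x\<bar> \<le> g x"
  shows "\<bar>infsum f A\<bar> \<le> infsum g A"
proof -
  have "(\<lambda>x. norm (f x)) summable_on A"
    by (rule Infinite_Sum.abs_summable_on_comparison_test'[OF assms(1)]) (use assms(2) in force)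
  then have "f summable_on A"
    using summable_on_iff_abs_summable_on_real by blast
  then show ?thesis
    using norm_infsum_le[OF has_sum_infsum[of f] has_sum_infsum[OF assms(1)]] assms(2) by simp
qed

lemma infsum_supported_at:
  fixes f :: "'a \<Rightarrow> real"
  assumes "\<And>x. x \<noteq> c \<Longrightarrow> f x = 0"
  shows "(\<Sum>\<^sub>\<infinity>x. f x) = f c"
  using infsum_cong_neutral[of "{c}" UNIV f f] assms by simp

lemma infsum_kernel_form_le:
  fixes K :: "'a \<Rightarrow> 'a \<Rightarrow> real" and F :: "'a \<Rightarrow> real"
  assumes F: "F summable_on UNIV" "\<And>x. 0 \<le> F x" and K: "\<And>x y. \<bar>K x y\<bar> \<le> M"
  shows "(\<Sum>\<^sub>\<infinity>x. (\<Sum>\<^sub>\<infinity>y. K x y * F y) * F x) \<le> M * (\<Sum>\<^sub>\<infinity>x. F x)^2"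
proof -
  define S where "S = (\<Sum>\<^sub>\<infinity>x. F x)"
  have S: "0 \<le> S"
    unfolding S_def using F by (intro infsum_nonneg) auto
  have M: "0 \<le> M"
    using K abs_ge_zero order_trans by blast
  have inner: "\<bar>\<Sum>\<^sub>\<infinity>y. K x y * F y\<bar> \<le> M * S" for x
  proof -
    have "\<bar>\<Sum>\<^sub>\<infinity>y. K x y * F y\<bar> \<le> (\<Sum>\<^sub>\<infinity>y. M * F y)"
      using F K by (intro abs_infsum_le_dominating summable_on_cmult_right)
        (auto simp: abs_mult intro: mult_right_mono)
    then show ?thesis
      by (simp add: S_def infsum_cmult_right')
  qed
  have "\<bar>(\<Sum>\<^sub>\<infinity>y. K x y * F y) * F x\<bar> \<le> M * S * F x" for x
    using inner[of x] F(2)[of x] by (simp add: abs_mult mult_right_mono)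
  then have "(\<Sum>\<^sub>\<infinity>x. (\<Sum>\<^sub>\<infinity>y. K x y * F y) * F x) \<le> (\<Sum>\<^sub>\<infinity>x. M * S * F x)"
    using F(1) by (intro abs_infsum_le_dominating[THEN abs_le_D1] summable_on_cmult_right) auto
  also have "\<dots> = M * S^2"
    by (simp add: S_def infsum_cmult_right' power2_eq_square)
  finally show ?thesis
    by (simp add: S_def)
qed

definition grad_energy :: "(lat \<Rightarrow> real) \<Rightarrow> real" where
  "grad_energy u = (\<Sum>\<^sub>\<infinity>x. (grad_norm u x)^2)"

definition choquard_term :: "real \<Rightarrow> real \<Rightarrow> (lat \<Rightarrow> real) \<Rightarrow> real" where
  "choquard_term \<alpha> p u = (\<Sum>\<^sub>\<infinity>x. conv \<alpha> (\<lambda>y. \<bar>u y\<bar> powr p) x * \<bar>u x\<bar> powr p)"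

lemma Jfun_eq:
  "Jfun a b \<alpha> p h u = Hnorm a h u ^ 2 / 2 + b/4 * grad_energy u ^ 2 - choquard_term \<alpha> p u / (2*p)"
  by (simp add: Jfun_def grad_energy_def choquard_term_def)

lemma abs_powr_le_square:
  fixes v p :: real
  assumes "\<bar>v\<bar> \<le> 1" "2 \<le> p"
  shows "\<bar>v\<bar> powr p \<le> v^2"
  using powr_mono'[OF assms(2), of "\<bar>v\<bar>"] assms(1) by simp

lemma choquard_term_le:
  assumes u: "(\<lambda>x. (u x)^2) summable_on UNIV" "\<And>x. \<bar>u x\<bar> \<le> 1" and "2 \<le> p"
  shows "choquard_term \<alpha> p u \<le> R_alpha \<alpha> 0 0 * (\<Sum>\<^sub>\<infinity>x. (u x)^2)^2"
proof -
  define F where "F x = \<bar>u x\<bar> powr p" for x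
  have F: "0 \<le> F x" "F x \<le> (u x)^2" for x
    unfolding F_def using abs_powr_le_square u(2) \<open>2 \<le> p\<close> by auto
  have sF: "F summable_on UNIV"
    using F by (intro summable_on_comparison_test[OF u(1)]) auto
  have "choquard_term \<alpha> p u \<le> R_alpha \<alpha> 0 0 * (\<Sum>\<^sub>\<infinity>x. F x)^2"
    unfolding choquard_term_def conv_def F_def[symmetric]
    using F(1) sF abs_R_alpha_le_diag by (intro infsum_kernel_form_le) auto
  also have "\<dots> \<le> R_alpha \<alpha> 0 0 * (\<Sum>\<^sub>\<infinity>x. (u x)^2)^2"
    using F sF u(1) abs_R_alpha_le_diag[of \<alpha> 0 0]
    by (intro mult_left_mono power_mono infsum_mono infsum_nonneg) auto
  finally show ?thesis .
qed

lemma Hsp_square_summable_le: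
  assumes "0 \<le> a" "0 \<le> h0" "\<forall>x. h0 \<le> h x" "u \<in> Hsp a h"
  shows "(\<lambda>x. (u x)^2) summable_on UNIV" "h0 * (\<Sum>\<^sub>\<infinity>x. (u x)^2) \<le> Hnorm a h u ^ 2"
proof -
  have H1: "(\<lambda>x. (grad_norm u x)^2 + (u x)^2) summable_on UNIV" and
    weighted: "(\<lambda>x. h x * (u x)^2) summable_on UNIV"
    using assms(4) by (auto simp: Hsp_def H1_def)
  show sq: "(\<lambda>x. (u x)^2) summable_on UNIV"
    by (rule summable_on_comparison_test[OF H1]) auto
  have grad: "(\<lambda>x. (grad_norm u x)^2) summable_on UNIV"
    by (rule summable_on_comparison_test[OF H1]) auto
  have energy: "(\<lambda>x. a * (grad_norm u x)^2 + h x * (u x)^2) summable_on UNIV"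
    by (intro summable_on_add summable_on_cmult_right grad weighted)
  have "h0 * (\<Sum>\<^sub>\<infinity>x. (u x)^2) = (\<Sum>\<^sub>\<infinity>x. h0 * (u x)^2)"
    by (simp add: infsum_cmult_right')
  also have "\<dots> \<le> (\<Sum>\<^sub>\<infinity>x. a * (grad_norm u x)^2 + h x * (u x)^2)"
  proof (rule infsum_mono[OF summable_on_cmult_right[OF sq] energy])
    show "h0 * (u x)^2 \<le> a * (grad_norm u x)^2 + h x * (u x)^2" for x
      using mult_right_mono[of h0 "h x" "(u x)^2"] assms(1,3) by (simp add: add_increasing)
  qed
  also have "\<dots> = Hnorm a h u ^ 2"
  proof -
    have "0 \<le> h x" for x
      using assms(2,3) order_trans by blast
    then have "0 \<le> (\<Sum>\<^sub>\<infinity>x. a * (grad_norm u x)^2 + h x * (u x)^2)"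
      using assms(1) by (intro infsum_nonneg) auto
    then show ?thesis
      by (simp add: Hnorm_def)
  qed
  finally show "h0 * (\<Sum>\<^sub>\<infinity>x. (u x)^2) \<le> Hnorm a h u ^ 2" .
qed

lemma Jfun_ge_near_zero:
  assumes "0 \<le> a" "0 \<le> b" "2 \<le> p" "0 < h0" "\<forall>x. h0 \<le> h x" "u \<in> Hsp a h"
    and small: "Hnorm a h u ^ 2 \<le> h0"
  shows "Hnorm a h u ^ 2 / 2 - R_alpha \<alpha> 0 0 / (2*p) * (Hnorm a h u ^ 2 / h0)^2 \<le> Jfun a b \<alpha> p h u"
proof -
  define U where "U = (\<Sum>\<^sub>\<infinity>x. (u x)^2)"
  have sq: "(\<lambda>x. (u x)^2) summable_on UNIV" "h0 * U \<le> Hnorm a h u ^ 2"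
    using Hsp_square_summable_le[of a h0 h u] assms by (auto simp: U_def)
  have U: "0 \<le> U" "U \<le> Hnorm a h u ^ 2 / h0"
    using sq(2) \<open>0 < h0\<close> by (auto simp: U_def infsum_nonneg pos_le_divide_eq mult.commute)
  have "\<bar>u x\<bar> \<le> 1" for x
  proof -
    have "(u x)^2 \<le> U"
      using finite_sum_le_infsum[OF sq(1), of "{x}"] by (simp add: U_def)
    also have "\<dots> \<le> Hnorm a h u ^ 2 / h0"
      using U(2) .
    also have "\<dots> \<le> 1"
      using small \<open>0 < h0\<close> by simp
    finally show ?thesis
      by (simp add: abs_square_le_1)
  qed
  then have "choquard_term \<alpha> p u \<le> R_alpha \<alpha> 0 0 * U^2"
    using choquard_term_le sq(1) \<open>2 \<le> p\<close> by (simp add: U_def)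
  also have "\<dots> \<le> R_alpha \<alpha> 0 0 * (Hnorm a h u ^ 2 / h0)^2"
    using U abs_R_alpha_le_diag[of \<alpha> 0 0] by (intro mult_left_mono power_mono) auto
  finally have "choquard_term \<alpha> p u / (2*p) \<le> R_alpha \<alpha> 0 0 / (2*p) * (Hnorm a h u ^ 2 / h0)^2"
    using \<open>2 \<le> p\<close> by (simp add: divide_right_mono)
  moreover have "0 \<le> b/4 * grad_energy u ^ 2"
    using \<open>0 \<le> b\<close> by simp
  ultimately show ?thesis
    unfolding Jfun_eq by linarith
qed

lemma Jfun_bounded_below_on_sphere:
  assumes "0 \<le> a" "0 \<le> b" "2 \<le> p" "0 < h0" "\<forall>x. h0 \<le> h x"
  shows "\<exists>\<theta> \<rho>. 0 < \<theta> \<and> 0 < \<rho> \<and> (\<forall>u \<in> Hsp a h. Hnorm a h u = \<rho> \<longrightarrow> \<theta> \<le> Jfun a b \<alpha> p h u)"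
proof -
  define M where "M = R_alpha \<alpha> 0 0"
  have M: "0 \<le> M"
    unfolding M_def using abs_R_alpha_le_diag[of \<alpha> 0 0] by linarith
  define r where "r = min h0 (p * h0^2 / (2 * (M + 1)))"
  have r: "0 < r" "r \<le> h0"
    using assms(3,4) M by (auto simp: r_def)
  have "M * r \<le> M * (p * h0^2 / (2 * (M + 1)))"
    using M by (intro mult_left_mono) (auto simp: r_def)
  also have "\<dots> \<le> p * h0^2 / 2"
    using M assms(3) by (simp add: field_simps)
  finally have "M / (2*p) * (r / h0)^2 \<le> r / 4"
    using r assms(3,4) by (simp add: field_simps power2_eq_square)
  then have "r / 4 \<le> Jfun a b \<alpha> p h u" if "u \<in> Hsp a h" "Hnorm a h u = sqrt r" for u
    using Jfun_ge_near_zero[OF assms that(1), of \<alpha>] that(2) r by (simp add: M_def)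
  then show ?thesis
    using r by (intro exI[of _ "r/4"] exI[of _ "sqrt r"]) auto
qed

lemma adj_sym: "adj x y \<longleftrightarrow> adj y x"
  by (simp add: adj_def abs_minus_commute)

lemma finite_adj: "finite {y. adj x y}"
proof (rule finite_subset)
  show "{y. adj x y} \<subseteq> {fst x - 1..fst x + 1} \<times> {fst (snd x) - 1..fst (snd x) + 1}
      \<times> {snd (snd x) - 1..snd (snd x) + 1}"
    by (auto simp: adj_def mem_Times_iff)
qed simp

lemma grad_norm_eq_0_outside_nbhd:
  assumes "u x = 0" "\<And>y. adj x y \<Longrightarrow> u y = 0"
  shows "grad_norm u x = 0"
  using assms by (simp add: grad_norm_def)

lemma grad_norm_zero_fun [simp]: "grad_norm (\<lambda>_. 0) x = 0"
  by (simp add: grad_norm_def)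

lemma fin_supp_grad_norm:
  assumes "fin_supp u"
  shows "finite {x. grad_norm u x \<noteq> 0}"
proof -
  let ?S = "{x. u x \<noteq> 0}"
  have "{x. grad_norm u x \<noteq> 0} \<subseteq> ?S \<union> (\<Union>y\<in>?S. {x. adj y x})"
    using grad_norm_eq_0_outside_nbhd[of u] adj_sym by blast
  then show ?thesis
    using assms finite_adj by (auto simp: fin_supp_def intro: finite_subset)
qed

lemma fin_supp_in_Hsp:
  assumes "fin_supp u"
  shows "u \<in> Hsp a h"
proof -
  have fin: "finite {x. u x \<noteq> 0}" "finite {x. grad_norm u x \<noteq> 0}"
    using assms fin_supp_grad_norm by (auto simp: fin_supp_def)
  have "(\<lambda>x. (grad_norm u x)^2 + (u x)^2) summable_on UNIV"
    by (rule finite_nonzero_values_imp_summable_on, rule finite_subset[OF _ finite_UnI[OF fin]]) auto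
  moreover have "(\<lambda>x. h x * (u x)^2) summable_on UNIV"
    by (rule finite_nonzero_values_imp_summable_on, rule finite_subset[OF _ fin(1)]) auto
  ultimately show ?thesis
    using assms unfolding Hsp_def H1_def by (auto intro!: exI[of _ "\<lambda>n. u"])
qed

lemma grad_norm_scale: "grad_norm (\<lambda>z. t * u z) x = \<bar>t\<bar> * grad_norm u x"
proof -
  have "(\<Sum>y\<in>{y. adj x y}. (t * u y - t * u x)^2) = t^2 * (\<Sum>y\<in>{y. adj x y}. (u y - u x)^2)"
    by (simp add: sum_distrib_left power_mult_distrib flip: right_diff_distrib)
  then have "(1/2) * (\<Sum>y\<in>{y. adj x y}. (t * u y - t * u x)^2)
      = t^2 * ((1/2) * (\<Sum>y\<in>{y. adj x y}. (u y - u x)^2))"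
    by simp
  then show ?thesis
    unfolding grad_norm_def by (simp only: real_sqrt_mult real_sqrt_abs)
qed

lemma Hnorm_scale: "Hnorm a h (\<lambda>x. t * u x) = \<bar>t\<bar> * Hnorm a h u"
proof -
  have "(\<Sum>\<^sub>\<infinity>x. a * (grad_norm (\<lambda>z. t * u z) x)^2 + h x * (t * u x)^2)
      = t^2 * (\<Sum>\<^sub>\<infinity>x. a * (grad_norm u x)^2 + h x * (u x)^2)"
    by (simp add: grad_norm_scale power_mult_distrib algebra_simps flip: infsum_cmult_right')
  then show ?thesis
    by (simp add: Hnorm_def real_sqrt_mult)
qed

lemma grad_energy_scale: "grad_energy (\<lambda>x. t * u x) = t^2 * grad_energy u"
  by (simp add: grad_energy_def grad_norm_scale power_mult_distrib infsum_cmult_right')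

lemma choquard_term_scale:
  assumes "0 \<le> t"
  shows "choquard_term \<alpha> p (\<lambda>x. t * u x) = t powr (2*p) * choquard_term \<alpha> p u"
proof -
  have F: "\<bar>t * u y\<bar> powr p = t powr p * \<bar>u y\<bar> powr p" for y
    using assms by (simp add: abs_mult powr_mult)
  have "conv \<alpha> (\<lambda>y. t powr p * \<bar>u y\<bar> powr p) x = t powr p * conv \<alpha> (\<lambda>y. \<bar>u y\<bar> powr p) x" for x
    unfolding conv_def by (simp add: mult.left_commute infsum_cmult_right')
  then have "choquard_term \<alpha> p (\<lambda>x. t * u x) = (t powr p * t powr p) * choquard_term \<alpha> p u"
    unfolding choquard_term_def F by (simp add: ac_simps flip: infsum_cmult_right')
  then show ?thesis
    by (simp add: powr_add[symmetric])
qed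

lemma Jfun_scale:
  assumes "0 \<le> t"
  shows "Jfun a b \<alpha> p h (\<lambda>x. t * u x)
    = t^2 * (Hnorm a h u ^ 2 / 2) + t^4 * (b/4 * grad_energy u ^ 2)
      - t powr (2*p) * (choquard_term \<alpha> p u / (2*p))"
  using assms by (simp add: Jfun_eq Hnorm_scale grad_energy_scale choquard_term_scale power_mult_distrib)

lemma Jfun_negative_far_out:
  assumes "2 < p" "fin_supp u" "0 < Hnorm a h u" "0 < choquard_term \<alpha> p u"
  shows "\<exists>e \<in> Hsp a h. \<rho> < Hnorm a h e \<and> Jfun a b \<alpha> p h e < 0"
proof -
  define A where "A = Hnorm a h u ^ 2 / 2"
  define B where "B = b/4 * grad_energy u ^ 2"
  define C where "C = choquard_term \<alpha> p u / (2*p)"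
  define N where "N = Hnorm a h u"
  have "0 < C" "0 < N"
    using assms by (simp_all add: C_def N_def)
  have "eventually (\<lambda>t::real. 0 \<le> t) at_top"
    by (rule eventually_ge_at_top)
  moreover have "eventually (\<lambda>t. \<rho> < t * N) at_top"
    using \<open>0 < N\<close> by real_asymp
  moreover have "eventually (\<lambda>t. t^2 * A + t^4 * B < t powr (2*p) * C) at_top"
    using \<open>0 < C\<close> \<open>2 < p\<close> by real_asymp
  ultimately have "eventually (\<lambda>t. 0 \<le> t \<and> \<rho> < t * N \<and> t^2 * A + t^4 * B < t powr (2*p) * C) at_top"
    by (intro eventually_conj)
  then obtain t where t: "0 \<le> t" "\<rho> < t * N" "t^2 * A + t^4 * B < t powr (2*p) * C"
    unfolding eventually_at_top_linorder by blast
  have "fin_supp (\<lambda>x. t * u x)"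
    using assms(2) unfolding fin_supp_def by (rule finite_subset[rotated]) auto
  moreover have "Jfun a b \<alpha> p h (\<lambda>x. t * u x) < 0"
    using t by (simp add: Jfun_scale A_def B_def C_def)
  ultimately show ?thesis
    using t fin_supp_in_Hsp by (intro bexI[of _ "\<lambda>x. t * u x"]) (auto simp: Hnorm_scale N_def)
qed

definition unit_impulse :: "lat \<Rightarrow> real" where
  "unit_impulse x = (if x = 0 then 1 else 0)"

lemma fin_supp_unit_impulse: "fin_supp unit_impulse"
  unfolding fin_supp_def unit_impulse_def by simp

lemma choquard_term_unit_impulse: "choquard_term \<alpha> p unit_impulse = R_alpha \<alpha> 0 0"
proof -
  have "conv \<alpha> (\<lambda>y. \<bar>unit_impulse y\<bar> powr p) x = R_alpha \<alpha> x 0" for x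
    unfolding conv_def by (subst infsum_supported_at[where c=0]) (auto simp: unit_impulse_def)
  then show ?thesis
    unfolding choquard_term_def by (subst infsum_supported_at[where c=0]) (auto simp: unit_impulse_def)
qed

lemma Hnorm_unit_impulse_pos:
  assumes "0 \<le> a" "0 < h0" "\<forall>x. h0 \<le> h x"
  shows "0 < Hnorm a h unit_impulse"
proof -
  have "0 \<le> h x" for x
    using assms(2,3) by (meson less_le_trans less_imp_le)
  then have nonneg: "0 \<le> Hnorm a h unit_impulse"
    unfolding Hnorm_def using assms(1)
    by (intro real_sqrt_ge_zero infsum_nonneg add_nonneg_nonneg mult_nonneg_nonneg) auto
  have "(\<Sum>\<^sub>\<infinity>x. (unit_impulse x)^2) = 1"
    by (subst infsum_supported_at[where c=0]) (auto simp: unit_impulse_def)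
  then have "h0 \<le> Hnorm a h unit_impulse ^ 2"
    using Hsp_square_summable_le(2)[OF assms(1) _ assms(3) fin_supp_in_Hsp[OF fin_supp_unit_impulse]]
      assms(2) by simp
  with nonneg show ?thesis
    using assms(2) by (cases "Hnorm a h unit_impulse = 0") auto
qed

theorem lemma3p1:
  fixes a b \<alpha> p h0 :: real and h :: "lat \<Rightarrow> real"
  assumes "a > 0" and "b > 0" and "0 < \<alpha>" and "\<alpha> < 3" and "p > 2"
    and "h0 > 0" and "\<forall>x. h x \<ge> h0"
  shows "\<exists>\<theta> \<rho>. \<theta> > 0 \<and> \<rho> > 0 \<and>
           (\<forall>u \<in> Hsp a h. Hnorm a h u = \<rho> \<longrightarrow> Jfun a b \<alpha> p h u \<ge> \<theta>) \<and>
           (\<exists>e \<in> Hsp a h. Hnorm a h e > \<rho> \<and> Jfun a b \<alpha> p h e < 0)"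
proof -
  obtain \<theta> \<rho> where sphere: "0 < \<theta>" "0 < \<rho>"
    "\<forall>u \<in> Hsp a h. Hnorm a h u = \<rho> \<longrightarrow> \<theta> \<le> Jfun a b \<alpha> p h u"
    using Jfun_bounded_below_on_sphere[of a b p h0 h \<alpha>] assms by auto
  have "0 < choquard_term \<alpha> p unit_impulse"
    using R_alpha_diag_pos[OF assms(3,4)] by (simp add: choquard_term_unit_impulse)
  then have "\<exists>e \<in> Hsp a h. \<rho> < Hnorm a h e \<and> Jfun a b \<alpha> p h e < 0"
    using Jfun_negative_far_out[OF assms(5) fin_supp_unit_impulse] Hnorm_unit_impulse_pos[of a h0 h] assms
    by auto
  then show ?thesis
    using sphere by blast
qed

end
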